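(* For any Bessel sequence $\{x_k\}_{k=1}^\infty$ in the real or complex space $\ell_2$, the family $\{\tilde{x}_k\}_{k=1}^\infty$ is a Bessel sequence in $\tilde{\mathbb{H}}$. However, $\{\tilde{x}_k\}_{k=1}^\infty$ is not a frame for $\tilde{\mathbb{H}}$.
   Context: A sequence $\{y_k\}$ in a Hilbert space $K$ is Bessel if there is $B<\infty$ with $\sum_k|\langle y,y_k\rangle|^2\le B\|y\|^2$ for all $y\in K$; it is a frame if additionally there is $A>0$ with $A\|y\|^2\le\sum_k|\langle y,y_k\rangle|^2$. Let $\tilde{\mathbb{H}}=\left(\sum_{i=1}^\infty\oplus\ell_2\right)_{\ell_2}$ be the $\ell_2$-direct sum of countably many copies of real $\ell_2$, with inner product $\langle(\vec{x}_i),(\vec{y}_i)\rangle=\sum_i\langle\vec{x}_i,\vec{y}_i\rangle$. For $x=(x_i)\in\ell_2$, $\tilde{x}=(\vec{x}_1,\vec{x}_2,\dots)\in\tilde{\mathbb{H}}$ where, in the real case, $\vec{x}_n=(x_nx_n,x_nx_{n+1},x_nx_{n+2},\dots)$, and in the complex case, $\vec{x}_n=(|x_n|^2,\mathrm{Re}(\bar{x}_nx_{n+1}),\mathrm{Im}(\bar{x}_nx_{n+1}),\mathrm{Re}(\bar{x}_nx_{n+2}),\mathrm{Im}(\bar{x}_nx_{n+2}),\dots)$. *)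

theory Defs
  imports "HOL-Analysis.Analysis"
begin

text \<open>Abstract Bessel sequences and frames in a (pre-)Hilbert space given by a carrier set S
  and an inner product ip (with values in reals or complexes); the squared norm of v is
  norm (ip v v). Sequences are indexed by nat (starting at 0 instead of 1).\<close>

definition bessel_seq :: "'a set \<Rightarrow> ('a \<Rightarrow> 'a \<Rightarrow> 'b::real_normed_vector) \<Rightarrow> (nat \<Rightarrow> 'a) \<Rightarrow> bool" where
  "bessel_seq S ip y \<longleftrightarrow> (\<forall>k. y k \<in> S) \<and>
     (\<exists>B::real. \<forall>v\<in>S. summable (\<lambda>k. (norm (ip v (y k)))\<^sup>2) \<and>
                     (\<Sum>k. (norm (ip v (y k)))\<^sup>2) \<le> B * norm (ip v v))"

definition frame_seq :: "'a set \<Rightarrow> ('a \<Rightarrow> 'a \<Rightarrow> 'b::real_normed_vector) \<Rightarrow> (nat \<Rightarrow> 'a) \<Rightarrow> bool" where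
  "frame_seq S ip y \<longleftrightarrow> bessel_seq S ip y \<and>
     (\<exists>A::real. A > 0 \<and> (\<forall>v\<in>S. A * norm (ip v v) \<le> (\<Sum>k. (norm (ip v (y k)))\<^sup>2)))"

definition l2_real :: "(nat \<Rightarrow> real) set" where
  "l2_real = {x. summable (\<lambda>i. (x i)\<^sup>2)}"

definition ip_real :: "(nat \<Rightarrow> real) \<Rightarrow> (nat \<Rightarrow> real) \<Rightarrow> real" where
  "ip_real x y = (\<Sum>i. x i * y i)"

definition l2_cplx :: "(nat \<Rightarrow> complex) set" where
  "l2_cplx = {x. summable (\<lambda>i. (norm (x i))\<^sup>2)}"

definition ip_cplx :: "(nat \<Rightarrow> complex) \<Rightarrow> (nat \<Rightarrow> complex) \<Rightarrow> complex" where
  "ip_cplx x y = (\<Sum>i. x i * cnj (y i))"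

text \<open>The l2-direct sum of countably many copies of real l2: z i is the i-th component.\<close>

definition Htilde :: "(nat \<Rightarrow> nat \<Rightarrow> real) set" where
  "Htilde = {z. (\<forall>i. z i \<in> l2_real) \<and> summable (\<lambda>i. ip_real (z i) (z i))}"

definition ip_H :: "(nat \<Rightarrow> nat \<Rightarrow> real) \<Rightarrow> (nat \<Rightarrow> nat \<Rightarrow> real) \<Rightarrow> real" where
  "ip_H z w = (\<Sum>i. ip_real (z i) (w i))"

definition tilde_real :: "(nat \<Rightarrow> real) \<Rightarrow> nat \<Rightarrow> nat \<Rightarrow> real" where
  "tilde_real x = (\<lambda>n j. x n * x (n + j))"

definition tilde_cplx :: "(nat \<Rightarrow> complex) \<Rightarrow> nat \<Rightarrow> nat \<Rightarrow> real" where
  "tilde_cplx x = (\<lambda>n j. if j = 0 then (norm (x n))\<^sup>2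
      else if odd j then Re (cnj (x n) * x (n + (j + 1) div 2))
      else Im (cnj (x n) * x (n + j div 2)))"

end

theory Submission
  imports Defs
begin

text \<open>For z in Htilde the pairing with x~ unfolds to a double series: ip_H z x~ is the sum over n
  of conj (x n) * <x, v n>, where v n is the n-th component of z shifted right by n (in the complex
  case first repacked into complex numbers), so that |v n| = |z n|. Cauchy--Schwarz in n followed by
  the Bessel inequality of the x k, applied to every v n, gives the Bessel bound B^2 for the x~ k.
  A lower frame bound A fails on the unit vectors e j of the component 0: the sum over k and j < J
  of |<e j, x~ k>|^2 is at most 2 B times the sum over k of |x k 0|^2, which is finite, whereas the
  frame inequality would make it at least J * A.\<close>

lemma Cauchy_Schwarz_suminf:
  fixes f :: "nat \<Rightarrow> 'a::banach" and a c :: "nat \<Rightarrow> real"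
  assumes f: "\<And>n. norm (f n) \<le> a n * c n" and a0: "\<And>n. 0 \<le> a n" and c0: "\<And>n. 0 \<le> c n"
    and sa: "summable (\<lambda>n. (a n)\<^sup>2)" and sc: "summable (\<lambda>n. (c n)\<^sup>2)"
  shows "summable f" "(norm (suminf f))\<^sup>2 \<le> (\<Sum>n. (a n)\<^sup>2) * (\<Sum>n. (c n)\<^sup>2)"
proof -
  have amgm: "a n * c n \<le> ((a n)\<^sup>2 + (c n)\<^sup>2) / 2" for n
    using sum_squares_bound[of "a n" "c n"] by (simp add: field_simps)
  have sac: "summable (\<lambda>n. a n * c n)"
    by (rule summable_comparison_test'[of "\<lambda>n. ((a n)\<^sup>2 + (c n)\<^sup>2) / 2"])
       (use amgm sa sc a0 c0 in \<open>auto intro!: summable_add summable_divide\<close>)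
  have sn: "summable (\<lambda>n. norm (f n))"
    by (rule summable_comparison_test'[OF sac]) (use f in auto)
  then show "summable f" by (rule summable_norm_cancel)
  have le1: "norm (suminf f) \<le> (\<Sum>n. a n * c n)"
    using summable_norm[OF sn] suminf_le[OF f sn sac] by linarith
  define P where "P = (\<Sum>n. (a n)\<^sup>2) * (\<Sum>n. (c n)\<^sup>2)"
  have partial: "(\<Sum>i<N. a i * c i) \<le> sqrt P" for N
  proof -
    have "(\<Sum>i<N. a i * c i)\<^sup>2 \<le> (\<Sum>i<N. (a i)\<^sup>2) * (\<Sum>i<N. (c i)\<^sup>2)"
      by (rule Cauchy_Schwarz_ineq_sum)
    also have "\<dots> \<le> P" unfolding P_def
      using sa sc by (intro mult_mono sum_le_suminf) (auto intro!: suminf_nonneg sum_nonneg)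
    finally show ?thesis using real_le_rsqrt by blast
  qed
  have "(\<Sum>n. a n * c n) \<le> sqrt P" using sac partial by (rule suminf_le_const)
  with le1 have "norm (suminf f) \<le> sqrt P" by linarith
  then have "(norm (suminf f))\<^sup>2 \<le> (sqrt P)\<^sup>2" by (intro power_mono) auto
  moreover have "0 \<le> P" unfolding P_def using sa sc by (auto intro!: mult_nonneg_nonneg suminf_nonneg)
  ultimately show "(norm (suminf f))\<^sup>2 \<le> (\<Sum>n. (a n)\<^sup>2) * (\<Sum>n. (c n)\<^sup>2)" by (simp add: P_def)
qed

lemma sums_zero_padded_iff:
  "(\<lambda>i. if n \<le> i then g i else 0) sums s \<longleftrightarrow> (\<lambda>j. g (n + j)) sums s"
proof -
  let ?G = "\<lambda>i. if n \<le> i then g i else 0"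
  have "strict_mono ((+) n)" by (rule strict_monoI) simp
  moreover have "?G i = 0" if "i \<notin> range ((+) n)" for i
  proof -
    have "\<not> n \<le> i" using that le_Suc_ex by blast
    then show ?thesis by simp
  qed
  ultimately have "(\<lambda>j. ?G (n + j)) sums s \<longleftrightarrow> ?G sums s" by (rule sums_mono_reindex)
  moreover have "(\<lambda>j. ?G (n + j)) = (\<lambda>j. g (n + j))" by simp
  ultimately show ?thesis by simp
qed

lemma sums_pairs:
  fixes F G :: "nat \<Rightarrow> real"
  assumes F: "F sums S" and G0: "G 0 = F 0" and GSuc: "\<And>m. G (Suc m) = F (2 * m + 1) + F (2 * m + 2)"
  shows "G sums S"
proof -
  have "(\<lambda>j. F (Suc j)) sums (S - F 0)" using F sums_Suc_iff[of F "S - F 0"] by simp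
  from sums_group[OF this, of 2]
  have "(\<lambda>m. \<Sum>j\<in>{m * 2..<m * 2 + 2}. F (Suc j)) sums (S - F 0)" by simp
  moreover have "(\<Sum>j\<in>{m * 2..<m * 2 + 2}. F (Suc j)) = G (Suc m)" for m
  proof -
    have "{m * 2..<m * 2 + 2} = {2 * m, 2 * m + 1}" by auto
    then show ?thesis by (simp add: GSuc)
  qed
  ultimately have "(\<lambda>m. G (Suc m)) sums (S - F 0)" by simp
  then show ?thesis using sums_Suc_iff[of G "S - F 0"] G0 by simp
qed

lemma sum_shifted_le_suminf:
  fixes g :: "nat \<Rightarrow> real"
  assumes "summable g" and "\<And>i. 0 \<le> g i"
  shows "(\<Sum>j<J. g (n + j)) \<le> suminf g"
proof -
  have "(\<Sum>j<J. g (n + j)) = sum g ((+) n ` {..<J})" by (simp add: sum.reindex)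
  also have "\<dots> \<le> suminf g" using assms by (intro sum_le_suminf) auto
  finally show ?thesis .
qed

lemma sum_half_index_le:
  fixes g :: "nat \<Rightarrow> real"
  assumes g0: "\<And>i. 0 \<le> g i"
  shows "(\<Sum>j<J. g ((j + 1) div 2)) \<le> 2 * (\<Sum>m<Suc J. g m)"
proof -
  have even: "(\<Sum>j<2 * M. g ((j + 1) div 2)) + g M \<le> 2 * (\<Sum>m<Suc M. g m)" for M
  proof (induction M)
    case 0 then show ?case using g0[of 0] by simp
  next
    case (Suc M)
    have "{..<2 * Suc M} = insert (Suc (2 * M)) (insert (2 * M) {..<2 * M})" by auto
    then have "(\<Sum>j<2 * Suc M. g ((j + 1) div 2)) = g (Suc M) + g M + (\<Sum>j<2 * M. g ((j + 1) div 2))"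
      by simp
    then show ?case using Suc g0[of M] g0[of "Suc M"] by simp
  qed
  have "(\<Sum>j<J. g ((j + 1) div 2)) \<le> (\<Sum>j<2 * J. g ((j + 1) div 2))"
    using g0 by (intro sum_mono2) auto
  also have "\<dots> \<le> 2 * (\<Sum>m<Suc J. g m)"
    using even[of J] g0[of J] by linarith
  finally show ?thesis .
qed

lemma suminf_suminf_swap_le:
  fixes d :: "nat \<Rightarrow> nat \<Rightarrow> real"
  assumes d0: "\<And>k n. 0 \<le> d k n" and rows: "\<And>k. summable (d k)"
    and cols: "\<And>n. summable (\<lambda>k. d k n)" "\<And>n. (\<Sum>k. d k n) \<le> s n" and s: "summable s"
  shows "summable (\<lambda>k. \<Sum>n. d k n)" "(\<Sum>k. \<Sum>n. d k n) \<le> (\<Sum>n. s n)"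
proof -
  have scols: "summable (\<lambda>n. \<Sum>k. d k n)"
  proof (rule summable_comparison_test'[OF s])
    fix n
    have "0 \<le> (\<Sum>k. d k n)" using cols(1) d0 by (rule suminf_nonneg)
    then show "norm (\<Sum>k. d k n) \<le> s n" using cols(2)[of n] by simp
  qed
  have partial: "(\<Sum>k<K. \<Sum>n. d k n) \<le> (\<Sum>n. s n)" for K
  proof -
    have "(\<Sum>k<K. \<Sum>n. d k n) = (\<Sum>n. \<Sum>k<K. d k n)"
      using rows by (subst suminf_sum) auto
    also have "\<dots> \<le> (\<Sum>n. \<Sum>k. d k n)"
      using cols d0 rows scols by (intro suminf_le sum_le_suminf summable_sum) auto
    also have "\<dots> \<le> (\<Sum>n. s n)"
      using cols scols s by (intro suminf_le) auto
    finally show ?thesis .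
  qed
  show "summable (\<lambda>k. \<Sum>n. d k n)"
    by (rule summableI_nonneg_bounded[where x="\<Sum>n. s n"]) (use rows d0 partial in \<open>auto intro!: suminf_nonneg\<close>)
  then show "(\<Sum>k. \<Sum>n. d k n) \<le> (\<Sum>n. s n)" using partial by (rule suminf_le_const)
qed

lemma summable_squares_of_suminf:
  fixes f a c :: "nat \<Rightarrow> nat \<Rightarrow> real"
  assumes f: "\<And>k n. \<bar>f k n\<bar> \<le> a k n * c k n" and a0: "\<And>k n. 0 \<le> a k n" and c0: "\<And>k n. 0 \<le> c k n"
    and a: "\<And>k. summable (\<lambda>n. (a k n)\<^sup>2)" "\<And>k. (\<Sum>n. (a k n)\<^sup>2) \<le> M"
    and c: "\<And>n. summable (\<lambda>k. (c k n)\<^sup>2)" "\<And>n. (\<Sum>k. (c k n)\<^sup>2) \<le> s n"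
    and s: "summable s"
  shows "summable (\<lambda>k. (\<Sum>n. f k n)\<^sup>2)" "(\<Sum>k. (\<Sum>n. f k n)\<^sup>2) \<le> M * (\<Sum>n. s n)"
proof -
  have rows: "summable (\<lambda>n. (c k n)\<^sup>2)" for k
  proof (rule summable_comparison_test'[OF s])
    fix n
    have "(c k n)\<^sup>2 \<le> (\<Sum>k. (c k n)\<^sup>2)" using sum_le_suminf[OF c(1), of "{k}"] by simp
    then show "norm ((c k n)\<^sup>2) \<le> s n" using c(2)[of n] by simp
  qed
  have M0: "0 \<le> M" using a by (meson order_trans suminf_nonneg zero_le_power2)
  have row_bound: "(\<Sum>n. f k n)\<^sup>2 \<le> M * (\<Sum>n. (c k n)\<^sup>2)" for k
  proof -
    have "(\<Sum>n. f k n)\<^sup>2 \<le> (\<Sum>n. (a k n)\<^sup>2) * (\<Sum>n. (c k n)\<^sup>2)"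
      using Cauchy_Schwarz_suminf(2)[of "f k" "a k" "c k"] f a0 c0 a(1) rows by simp
    also have "\<dots> \<le> M * (\<Sum>n. (c k n)\<^sup>2)"
      using a(2) rows by (intro mult_right_mono suminf_nonneg) auto
    finally show ?thesis .
  qed
  have swap: "summable (\<lambda>k. \<Sum>n. (c k n)\<^sup>2)" "(\<Sum>k. \<Sum>n. (c k n)\<^sup>2) \<le> (\<Sum>n. s n)"
    using suminf_suminf_swap_le[of "\<lambda>k n. (c k n)\<^sup>2", OF _ rows c s] by auto
  have dom: "summable (\<lambda>k. M * (\<Sum>n. (c k n)\<^sup>2))" using swap(1) by (rule summable_mult)
  show sq: "summable (\<lambda>k. (\<Sum>n. f k n)\<^sup>2)"
    by (rule summable_comparison_test'[OF dom]) (use row_bound in auto)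
  have "(\<Sum>k. (\<Sum>n. f k n)\<^sup>2) \<le> (\<Sum>k. M * (\<Sum>n. (c k n)\<^sup>2))"
    using row_bound sq dom by (rule suminf_le)
  also have "\<dots> = M * (\<Sum>k. \<Sum>n. (c k n)\<^sup>2)" using swap(1) by (rule suminf_mult)
  also have "\<dots> \<le> M * (\<Sum>n. s n)" using swap(2) M0 by (rule mult_left_mono)
  finally show "(\<Sum>k. (\<Sum>n. f k n)\<^sup>2) \<le> M * (\<Sum>n. s n)" .
qed

lemma bessel_seq_boundE:
  fixes ip :: "'a \<Rightarrow> 'a \<Rightarrow> 'b::real_normed_vector"
  assumes "bessel_seq S ip y"
  obtains B where "0 \<le> B" "\<And>k. y k \<in> S"
    "\<And>v. v \<in> S \<Longrightarrow> summable (\<lambda>k. (norm (ip v (y k)))\<^sup>2)"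
    "\<And>v. v \<in> S \<Longrightarrow> (\<Sum>k. (norm (ip v (y k)))\<^sup>2) \<le> B * norm (ip v v)"
    "\<And>k. norm (ip (y k) (y k)) \<le> B"
proof -
  obtain B where y: "\<And>k. y k \<in> S" and b: "\<forall>v\<in>S. summable (\<lambda>k. (norm (ip v (y k)))\<^sup>2) \<and>
      (\<Sum>k. (norm (ip v (y k)))\<^sup>2) \<le> B * norm (ip v v)"
    using assms unfolding bessel_seq_def by blast
  have sy: "\<And>v. v \<in> S \<Longrightarrow> summable (\<lambda>k. (norm (ip v (y k)))\<^sup>2)"
    and By: "\<And>v. v \<in> S \<Longrightarrow> (\<Sum>k. (norm (ip v (y k)))\<^sup>2) \<le> B * norm (ip v v)"
    using b by auto
  have "norm (ip (y k) (y k)) \<le> max B 0" for k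
  proof -
    let ?N = "norm (ip (y k) (y k))"
    have "?N\<^sup>2 \<le> (\<Sum>i. (norm (ip (y k) (y i)))\<^sup>2)"
      using sum_le_suminf[OF sy[OF y], of "{k}"] by simp
    also have "\<dots> \<le> B * ?N" using By[OF y] .
    finally have "?N * ?N \<le> B * ?N" by (simp add: power2_eq_square)
    then have "?N \<le> B" if "?N \<noteq> 0"
      using that by (intro mult_right_le_imp_le[of ?N ?N B]) auto
    then show ?thesis by fastforce
  qed
  moreover have "(\<Sum>k. (norm (ip v (y k)))\<^sup>2) \<le> max B 0 * norm (ip v v)" if "v \<in> S" for v
    using By[OF that] mult_right_mono[of B "max B 0" "norm (ip v v)"] by simp
  ultimately show ?thesis using y sy that[of "max B 0"] by simp
qed

text \<open>A frame bound A would give J * A \<le> C * (\<Sum>k. p k) after testing against J of the e j.\<close>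

lemma not_frame_seqI:
  fixes ip :: "'a \<Rightarrow> 'a \<Rightarrow> 'b::real_normed_vector" and e :: "nat \<Rightarrow> 'a"
  assumes e: "\<And>j. e j \<in> S" "\<And>j. norm (ip (e j) (e j)) = 1"
    and dom: "\<And>k j. (norm (ip (e j) (y k)))\<^sup>2 \<le> p k * h k j"
    and p: "\<And>k. 0 \<le> p k" "summable p" and h: "\<And>k J. (\<Sum>j<J. h k j) \<le> C"
  shows "\<not> frame_seq S ip y"
proof
  assume "frame_seq S ip y"
  then obtain A where A: "A > 0" "\<forall>v\<in>S. A * norm (ip v v) \<le> (\<Sum>k. (norm (ip v (y k)))\<^sup>2)"
    and "bessel_seq S ip y"
    unfolding frame_seq_def by blast
  from \<open>bessel_seq S ip y\<close> obtain B where sy: "\<And>v. v \<in> S \<Longrightarrow> summable (\<lambda>k. (norm (ip v (y k)))\<^sup>2)"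
    by (rule bessel_seq_boundE) blast
  have bound: "real J * A \<le> C * (\<Sum>k. p k)" for J
  proof -
    have "real J * A = (\<Sum>j<J. A * norm (ip (e j) (e j)))" using e(2) by simp
    also have "\<dots> \<le> (\<Sum>j<J. \<Sum>k. (norm (ip (e j) (y k)))\<^sup>2)" using A(2) e(1) by (intro sum_mono) blast
    also have "\<dots> = (\<Sum>k. \<Sum>j<J. (norm (ip (e j) (y k)))\<^sup>2)" using sy e(1) by (subst suminf_sum) auto
    also have "\<dots> \<le> (\<Sum>k. p k * C)"
    proof (rule suminf_le)
      fix k
      have "(\<Sum>j<J. (norm (ip (e j) (y k)))\<^sup>2) \<le> (\<Sum>j<J. p k * h k j)" by (intro sum_mono dom)
      also have "\<dots> = p k * (\<Sum>j<J. h k j)" by (simp add: sum_distrib_left)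
      also have "\<dots> \<le> p k * C" using h p(1) by (intro mult_left_mono)
      finally show "(\<Sum>j<J. (norm (ip (e j) (y k)))\<^sup>2) \<le> p k * C" .
    next
      show "summable (\<lambda>k. \<Sum>j<J. (norm (ip (e j) (y k)))\<^sup>2)"
        using sy e(1) by (intro summable_sum) auto
      show "summable (\<lambda>k. p k * C)" using p(2) by (rule summable_mult2)
    qed
    also have "\<dots> = C * (\<Sum>k. p k)" using suminf_mult2[OF p(2), of C] by (simp add: mult.commute)
    finally show ?thesis .
  qed
  obtain J :: nat where "C * (\<Sum>k. p k) < real J * A"
    using reals_Archimedean3[OF A(1)] by blast
  with bound[of J] show False by linarith
qed

lemma ip_real_self:
  assumes "v \<in> l2_real"
  shows "ip_real v v = (\<Sum>i. (v i)\<^sup>2)" "0 \<le> ip_real v v"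
  using assms unfolding l2_real_def ip_real_def by (auto simp: power2_eq_square intro!: suminf_nonneg)

lemma ip_real_zero_left [simp]: "ip_real (\<lambda>_. 0) w = 0"
  by (simp add: ip_real_def)

lemma summable_ip_real:
  assumes "u \<in> l2_real" "w \<in> l2_real"
  shows "summable (\<lambda>i. u i * w i)"
  using Cauchy_Schwarz_suminf(1)[of "\<lambda>i. u i * w i" "\<lambda>i. \<bar>u i\<bar>" "\<lambda>i. \<bar>w i\<bar>"] assms
  by (simp add: abs_mult l2_real_def)

lemma l2_real_dominated:
  assumes f: "\<And>j. (f j)\<^sup>2 \<le> g j" and g: "\<And>J. (\<Sum>j<J. g j) \<le> C"
  shows "f \<in> l2_real" "ip_real f f \<le> C"
proof -
  have g0: "0 \<le> g j" for j using f[of j] by (meson order_trans zero_le_power2)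
  have sg: "summable g" by (rule summableI_nonneg_bounded[OF g0 g])
  have sf: "summable (\<lambda>j. (f j)\<^sup>2)" by (rule summable_comparison_test'[OF sg]) (use f in auto)
  then show "f \<in> l2_real" by (simp add: l2_real_def)
  have "ip_real f f = (\<Sum>j. (f j)\<^sup>2)" by (simp add: ip_real_def power2_eq_square)
  also have "\<dots> \<le> (\<Sum>j. g j)" by (rule suminf_le[OF f sf sg])
  also have "\<dots> \<le> C" by (rule suminf_le_const[OF sg g])
  finally show "ip_real f f \<le> C" .
qed

definition unit_seq :: "nat \<Rightarrow> nat \<Rightarrow> 'a::zero_neq_one" where
  "unit_seq n i = (if i = n then 1 else 0)"

lemma unit_seq_l2_real: "unit_seq n \<in> l2_real"
proof -
  have "(\<lambda>i. (unit_seq n i :: real)\<^sup>2) = (\<lambda>i. if i = n then 1 else 0)" by (auto simp: unit_seq_def)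
  then show ?thesis unfolding l2_real_def using summable_single[of n "\<lambda>_. 1::real"] by simp
qed

lemma ip_real_unit_seq: "ip_real (unit_seq n) w = w n"
proof -
  have "(\<lambda>i. unit_seq n i * w i) = (\<lambda>i. if i = n then w i else 0)" by (auto simp: unit_seq_def)
  then show ?thesis unfolding ip_real_def using sums_single[of n w] sums_unique by metis
qed

definition shift_right :: "(nat \<Rightarrow> 'a::zero) \<Rightarrow> nat \<Rightarrow> nat \<Rightarrow> 'a" where
  "shift_right f n i = (if n \<le> i then f (i - n) else 0)"

lemma sums_shift_right_iff:
  assumes "g 0 = 0"
  shows "(\<lambda>i. g (shift_right f n i)) sums s \<longleftrightarrow> (\<lambda>i. g (f i)) sums s"
proof -
  have "(\<lambda>i. g (shift_right f n i)) = (\<lambda>i. if n \<le> i then g (f (i - n)) else 0)"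
    using assms by (auto simp: shift_right_def)
  then show ?thesis using sums_zero_padded_iff[of n "\<lambda>i. g (f (i - n))" s] by simp
qed

lemma shift_right_l2_real:
  assumes "f \<in> l2_real"
  shows "shift_right f n \<in> l2_real" "ip_real (shift_right f n) (shift_right f n) = ip_real f f"
proof -
  have "(\<lambda>i. (f i)\<^sup>2) sums ip_real f f"
    using assms ip_real_self(1)[OF assms] by (simp add: l2_real_def summable_sums)
  then have "(\<lambda>i. (shift_right f n i)\<^sup>2) sums ip_real f f"
    using sums_shift_right_iff[of "\<lambda>x. x\<^sup>2" f n "ip_real f f"] by simp
  then show "shift_right f n \<in> l2_real" "ip_real (shift_right f n) (shift_right f n) = ip_real f f"
    unfolding l2_real_def ip_real_def by (auto simp: sums_iff power2_eq_square)
qed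

lemma shift_left_l2_real: "w \<in> l2_real \<Longrightarrow> (\<lambda>j. w (n + j)) \<in> l2_real"
  unfolding l2_real_def using summable_ignore_initial_segment[of "\<lambda>i. (w i)\<^sup>2" n]
  by (simp add: add.commute)

lemma ip_real_shift_left:
  assumes "f \<in> l2_real" "w \<in> l2_real"
  shows "ip_real f (\<lambda>j. w (n + j)) = ip_real (shift_right f n) w"
proof -
  have "(\<lambda>j. f j * w (n + j)) sums ip_real f (\<lambda>j. w (n + j))"
    using summable_ip_real[OF assms(1) shift_left_l2_real[OF assms(2)]]
    unfolding ip_real_def by (rule summable_sums)
  then have "(\<lambda>i. if n \<le> i then f (i - n) * w i else 0) sums ip_real f (\<lambda>j. w (n + j))"
    using sums_zero_padded_iff[of n "\<lambda>i. f (i - n) * w i"] by simp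
  moreover have "(\<lambda>i. shift_right f n i * w i) = (\<lambda>i. if n \<le> i then f (i - n) * w i else 0)"
    by (auto simp: shift_right_def)
  ultimately show ?thesis unfolding ip_real_def by (simp add: sums_iff)
qed

lemma ip_H_self_nonneg: "z \<in> Htilde \<Longrightarrow> 0 \<le> ip_H z z"
  unfolding ip_H_def Htilde_def using ip_real_self(2) by (auto intro!: suminf_nonneg)

lemma Htilde_memI:
  assumes "\<And>n. z n \<in> l2_real" "\<And>n. ip_real (z n) (z n) \<le> g n" "summable g"
  shows "z \<in> Htilde"
proof -
  have "summable (\<lambda>n. ip_real (z n) (z n))"
    by (rule summable_comparison_test'[OF assms(3)]) (use assms(1,2) ip_real_self(2) in auto)
  then show ?thesis using assms(1) by (simp add: Htilde_def)
qed

lemma bessel_seq_HtildeI: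
  assumes "\<And>k. y k \<in> Htilde"
    and "\<And>z. z \<in> Htilde \<Longrightarrow> summable (\<lambda>k. (ip_H z (y k))\<^sup>2)"
    and "\<And>z. z \<in> Htilde \<Longrightarrow> (\<Sum>k. (ip_H z (y k))\<^sup>2) \<le> B * ip_H z z"
  shows "bessel_seq Htilde ip_H y"
  unfolding bessel_seq_def using assms ip_H_self_nonneg by (auto intro!: exI[of _ B])

definition Htilde_unit :: "nat \<Rightarrow> nat \<Rightarrow> nat \<Rightarrow> real" where
  "Htilde_unit j n = (if n = 0 then unit_seq j else (\<lambda>_. 0))"

lemma ip_H_Htilde_unit: "ip_H (Htilde_unit j) w = w 0 j"
proof -
  have "(\<lambda>n. ip_real (Htilde_unit j n) (w n)) = (\<lambda>n. if n = 0 then w n j else 0)"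
    by (simp add: Htilde_unit_def ip_real_unit_seq fun_eq_iff)
  then show ?thesis unfolding ip_H_def using sums_single[of 0 "\<lambda>n. w n j"] sums_unique by metis
qed

lemma Htilde_unit_in_Htilde: "Htilde_unit j \<in> Htilde"
proof (rule Htilde_memI)
  show "Htilde_unit j n \<in> l2_real" for n
    using unit_seq_l2_real by (simp add: Htilde_unit_def l2_real_def)
  show "ip_real (Htilde_unit j n) (Htilde_unit j n) \<le> (if n = 0 then 1 else 0)" for n
    by (simp add: Htilde_unit_def ip_real_unit_seq unit_seq_def)
qed (rule summable_single)

lemma ip_H_Htilde_unit_self: "ip_H (Htilde_unit j) (Htilde_unit j) = 1"
  by (simp add: ip_H_Htilde_unit Htilde_unit_def unit_seq_def)

lemma ip_real_tilde_real:
  assumes "f \<in> l2_real" "w \<in> l2_real"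
  shows "ip_real f (tilde_real w n) = w n * ip_real (shift_right f n) w"
proof -
  have "summable (\<lambda>j. f j * w (n + j))"
    by (rule summable_ip_real[OF assms(1) shift_left_l2_real[OF assms(2)]])
  then have "(\<Sum>j. w n * (f j * w (n + j))) = w n * ip_real f (\<lambda>j. w (n + j))"
    unfolding ip_real_def by (rule suminf_mult)
  moreover have "ip_real f (tilde_real w n) = (\<Sum>j. w n * (f j * w (n + j)))"
    unfolding ip_real_def tilde_real_def by (simp add: ac_simps)
  ultimately show ?thesis using ip_real_shift_left[OF assms] by simp
qed

lemma tilde_real_l2_real:
  assumes w: "w \<in> l2_real"
  shows "tilde_real w n \<in> l2_real" "ip_real (tilde_real w n) (tilde_real w n) \<le> (w n)\<^sup>2 * ip_real w w"
proof -
  have "(tilde_real w n j)\<^sup>2 \<le> (w n)\<^sup>2 * (w (n + j))\<^sup>2" for j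
    by (simp add: tilde_real_def power_mult_distrib)
  moreover have "(\<Sum>j<J. (w n)\<^sup>2 * (w (n + j))\<^sup>2) \<le> (w n)\<^sup>2 * ip_real w w" for J
    using w sum_shifted_le_suminf[where g="\<lambda>i. (w i)\<^sup>2" and J=J and n=n] ip_real_self(1)[OF w]
    by (simp add: l2_real_def sum_distrib_left[symmetric] mult_left_mono)
  ultimately show "tilde_real w n \<in> l2_real" "ip_real (tilde_real w n) (tilde_real w n) \<le> (w n)\<^sup>2 * ip_real w w"
    using l2_real_dominated[of "tilde_real w n" "\<lambda>j. (w n)\<^sup>2 * (w (n + j))\<^sup>2"] by blast+
qed

lemma tilde_real_in_Htilde:
  assumes w: "w \<in> l2_real"
  shows "tilde_real w \<in> Htilde"
proof (rule Htilde_memI[OF tilde_real_l2_real[OF w]])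
  show "summable (\<lambda>n. (w n)\<^sup>2 * ip_real w w)"
    using w by (intro summable_mult2) (simp add: l2_real_def)
qed

lemma bessel_seq_l2_realE:
  assumes "bessel_seq l2_real ip_real x"
  obtains B where "\<And>k. x k \<in> l2_real"
    "\<And>v. v \<in> l2_real \<Longrightarrow> summable (\<lambda>k. (ip_real v (x k))\<^sup>2)"
    "\<And>v. v \<in> l2_real \<Longrightarrow> (\<Sum>k. (ip_real v (x k))\<^sup>2) \<le> B * ip_real v v"
    "\<And>k. ip_real (x k) (x k) \<le> B"
proof -
  obtain B where x: "\<And>k. x k \<in> l2_real"
    and sx: "\<And>v. v \<in> l2_real \<Longrightarrow> summable (\<lambda>k. (norm (ip_real v (x k)))\<^sup>2)"
    and Bx: "\<And>v. v \<in> l2_real \<Longrightarrow> (\<Sum>k. (norm (ip_real v (x k)))\<^sup>2) \<le> B * norm (ip_real v v)"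
    and xB: "\<And>k. norm (ip_real (x k) (x k)) \<le> B"
    using assms by (rule bessel_seq_boundE) blast
  have "norm (ip_real v v) = ip_real v v" if "v \<in> l2_real" for v
    using ip_real_self(2)[OF that] by simp
  then show ?thesis using x sx Bx xB by (intro that) auto
qed

lemma bessel_seq_tilde_real:
  assumes "bessel_seq l2_real ip_real x"
  shows "bessel_seq Htilde ip_H (\<lambda>k. tilde_real (x k))"
proof -
  obtain B where x: "\<And>k. x k \<in> l2_real"
    and sx: "\<And>v. v \<in> l2_real \<Longrightarrow> summable (\<lambda>k. (ip_real v (x k))\<^sup>2)"
    and Bx: "\<And>v. v \<in> l2_real \<Longrightarrow> (\<Sum>k. (ip_real v (x k))\<^sup>2) \<le> B * ip_real v v"
    and xB: "\<And>k. ip_real (x k) (x k) \<le> B"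
    using assms by (rule bessel_seq_l2_realE) blast
  show ?thesis
  proof (rule bessel_seq_HtildeI)
    show "tilde_real (x k) \<in> Htilde" for k using x by (rule tilde_real_in_Htilde)
    fix z assume z: "z \<in> Htilde"
    then have zn: "\<And>n. z n \<in> l2_real" and sz: "summable (\<lambda>n. ip_real (z n) (z n))"
      by (auto simp: Htilde_def)
    define u where "u n = shift_right (z n) n" for n
    have u: "u n \<in> l2_real" "ip_real (u n) (u n) = ip_real (z n) (z n)" for n
      unfolding u_def using shift_right_l2_real[OF zn] by auto
    have ip: "ip_H z (tilde_real (x k)) = (\<Sum>n. x k n * ip_real (u n) (x k))" for k
      unfolding ip_H_def u_def using ip_real_tilde_real[OF zn x] by simp
    have "\<bar>x k n * ip_real (u n) (x k)\<bar> \<le> \<bar>x k n\<bar> * \<bar>ip_real (u n) (x k)\<bar>" for k n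
      by (simp add: abs_mult)
    moreover have "summable (\<lambda>n. \<bar>x k n\<bar>\<^sup>2)" "(\<Sum>n. \<bar>x k n\<bar>\<^sup>2) \<le> B" for k
      using x[of k] xB[of k] ip_real_self(1)[OF x[of k]] by (simp_all add: l2_real_def)
    moreover have "summable (\<lambda>k. \<bar>ip_real (u n) (x k)\<bar>\<^sup>2)"
      "(\<Sum>k. \<bar>ip_real (u n) (x k)\<bar>\<^sup>2) \<le> B * ip_real (z n) (z n)" for n
      using sx[OF u(1)] Bx[OF u(1)] u(2) by simp_all
    moreover have "summable (\<lambda>n. B * ip_real (z n) (z n))" using sz by (rule summable_mult)
    ultimately have "summable (\<lambda>k. (\<Sum>n. x k n * ip_real (u n) (x k))\<^sup>2)"
      "(\<Sum>k. (\<Sum>n. x k n * ip_real (u n) (x k))\<^sup>2) \<le> B * (\<Sum>n. B * ip_real (z n) (z n))"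
      using summable_squares_of_suminf[of "\<lambda>k n. x k n * ip_real (u n) (x k)" "\<lambda>k n. \<bar>x k n\<bar>"
          "\<lambda>k n. \<bar>ip_real (u n) (x k)\<bar>" B "\<lambda>n. B * ip_real (z n) (z n)"] by simp_all
    moreover have "(\<Sum>n. B * ip_real (z n) (z n)) = B * ip_H z z"
      unfolding ip_H_def using sz by (rule suminf_mult)
    ultimately show "summable (\<lambda>k. (ip_H z (tilde_real (x k)))\<^sup>2)"
      "(\<Sum>k. (ip_H z (tilde_real (x k)))\<^sup>2) \<le> (B * B) * ip_H z z"
      by (simp_all add: ip)
  qed
qed

lemma not_frame_seq_tilde_real:
  assumes "bessel_seq l2_real ip_real x"
  shows "\<not> frame_seq Htilde ip_H (\<lambda>k. tilde_real (x k))"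
proof -
  obtain B where x: "\<And>k. x k \<in> l2_real"
    and sx: "\<And>v. v \<in> l2_real \<Longrightarrow> summable (\<lambda>k. (ip_real v (x k))\<^sup>2)"
    and xB: "\<And>k. ip_real (x k) (x k) \<le> B"
    using assms by (rule bessel_seq_l2_realE) blast
  show ?thesis
  proof (rule not_frame_seqI[where e=Htilde_unit and p="\<lambda>k. (x k 0)\<^sup>2" and h="\<lambda>k j. (x k j)\<^sup>2"])
    show "(norm (ip_H (Htilde_unit j) (tilde_real (x k))))\<^sup>2 \<le> (x k 0)\<^sup>2 * (x k j)\<^sup>2" for k j
      by (simp add: ip_H_Htilde_unit tilde_real_def power_mult_distrib)
    show "summable (\<lambda>k. (x k 0)\<^sup>2)"
      using sx[OF unit_seq_l2_real] by (simp add: ip_real_unit_seq)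
    show "(\<Sum>j<J. (x k j)\<^sup>2) \<le> B" for k J
      using sum_le_suminf[of "\<lambda>j. (x k j)\<^sup>2" "{..<J}"] x[of k] xB[of k]
      by (simp add: l2_real_def ip_real_self(1))
  qed (simp_all add: Htilde_unit_in_Htilde ip_H_Htilde_unit_self)
qed

lemma norm_ip_cplx_self:
  assumes "v \<in> l2_cplx"
  shows "norm (ip_cplx v v) = (\<Sum>i. (cmod (v i))\<^sup>2)"
proof -
  have s: "summable (\<lambda>i. (cmod (v i))\<^sup>2)" using assms by (simp add: l2_cplx_def)
  have "v i * cnj (v i) = complex_of_real ((cmod (v i))\<^sup>2)" for i by (rule complex_norm_square[symmetric])
  then have "ip_cplx v v = (\<Sum>i. complex_of_real ((cmod (v i))\<^sup>2))"
    unfolding ip_cplx_def by (simp only:)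
  also have "\<dots> = complex_of_real (\<Sum>i. (cmod (v i))\<^sup>2)" by (rule suminf_of_real[OF s, symmetric])
  finally show ?thesis using suminf_nonneg[OF s] by simp
qed

lemma summable_ip_cplx:
  assumes "u \<in> l2_cplx" "w \<in> l2_cplx"
  shows "summable (\<lambda>i. u i * cnj (w i))"
  using Cauchy_Schwarz_suminf(1)[of "\<lambda>i. u i * cnj (w i)" "\<lambda>i. cmod (u i)" "\<lambda>i. cmod (w i)"] assms
  by (simp add: norm_mult l2_cplx_def)

lemma ip_cplx_commute:
  assumes "u \<in> l2_cplx" "w \<in> l2_cplx"
  shows "ip_cplx w u = cnj (ip_cplx u w)"
proof -
  have "(\<lambda>i. u i * cnj (w i)) sums ip_cplx u w"
    using summable_ip_cplx[OF assms] unfolding ip_cplx_def by (rule summable_sums)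
  then have "(\<lambda>i. cnj (u i * cnj (w i))) sums cnj (ip_cplx u w)" by (rule sums_cnj[THEN iffD2])
  then show ?thesis unfolding ip_cplx_def by (simp add: sums_iff mult.commute)
qed

lemma unit_seq_l2_cplx: "unit_seq n \<in> l2_cplx"
proof -
  have "(\<lambda>i. (cmod (unit_seq n i))\<^sup>2) = (\<lambda>i. if i = n then 1 else 0)" by (auto simp: unit_seq_def)
  then show ?thesis unfolding l2_cplx_def using summable_single[of n "\<lambda>_. 1::real"] by simp
qed

lemma ip_cplx_unit_seq: "ip_cplx (unit_seq n) w = cnj (w n)"
proof -
  have "(\<lambda>i. unit_seq n i * cnj (w i)) = (\<lambda>i. if i = n then cnj (w i) else 0)" by (auto simp: unit_seq_def)
  then show ?thesis unfolding ip_cplx_def using sums_single[of n "\<lambda>i. cnj (w i)"] sums_unique by metis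
qed

lemma shift_right_l2_cplx:
  assumes "v \<in> l2_cplx"
  shows "shift_right v n \<in> l2_cplx" "norm (ip_cplx (shift_right v n) (shift_right v n)) = norm (ip_cplx v v)"
proof -
  have "(\<lambda>i. (cmod (v i))\<^sup>2) sums norm (ip_cplx v v)"
    using assms norm_ip_cplx_self[OF assms] by (simp add: l2_cplx_def summable_sums)
  then have s: "(\<lambda>i. (cmod (shift_right v n i))\<^sup>2) sums norm (ip_cplx v v)"
    using sums_shift_right_iff[of "\<lambda>x. (cmod x)\<^sup>2" v n "norm (ip_cplx v v)"] by simp
  then show l2: "shift_right v n \<in> l2_cplx" by (auto simp: l2_cplx_def sums_iff)
  show "norm (ip_cplx (shift_right v n) (shift_right v n)) = norm (ip_cplx v v)"
    using s norm_ip_cplx_self[OF l2] by (simp add: sums_iff)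
qed

text \<open>Reassembles a real sequence into complex numbers so that an entry pair of tilde_cplx
  becomes the real part of one complex product (see ip_real_tilde_cplx).\<close>

definition pair_cplx :: "(nat \<Rightarrow> real) \<Rightarrow> nat \<Rightarrow> complex" where
  "pair_cplx f m = (if m = 0 then complex_of_real (f 0) else Complex (f (2 * m - 1)) (f (2 * m)))"

lemma pair_cplx_l2_cplx:
  assumes f: "f \<in> l2_real"
  shows "pair_cplx f \<in> l2_cplx" "norm (ip_cplx (pair_cplx f) (pair_cplx f)) = ip_real f f"
proof -
  have "(\<lambda>m. (cmod (pair_cplx f m))\<^sup>2) sums ip_real f f"
  proof (rule sums_pairs[where F="\<lambda>j. (f j)\<^sup>2"])
    show "(\<lambda>j. (f j)\<^sup>2) sums ip_real f f"
      using f ip_real_self(1)[OF f] by (simp add: l2_real_def summable_sums)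
    have "2 * Suc m - 1 = 2 * m + 1" "2 * Suc m = 2 * m + 2" for m by simp_all
    then show "(cmod (pair_cplx f (Suc m)))\<^sup>2 = (f (2 * m + 1))\<^sup>2 + (f (2 * m + 2))\<^sup>2" for m
      unfolding pair_cplx_def by (simp add: cmod_power2 del: mult_Suc_right)
  qed (simp add: pair_cplx_def)
  then show l2: "pair_cplx f \<in> l2_cplx"
    and "norm (ip_cplx (pair_cplx f) (pair_cplx f)) = ip_real f f"
    by (auto simp: l2_cplx_def sums_iff norm_ip_cplx_self)
qed

lemma tilde_cplx_sq_le: "(tilde_cplx w n j)\<^sup>2 \<le> (cmod (w n))\<^sup>2 * (cmod (w (n + (j + 1) div 2)))\<^sup>2"
proof (cases "j = 0")
  case True then show ?thesis by (simp add: tilde_cplx_def power2_eq_square)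
next
  case False
  let ?q = "cnj (w n) * w (n + (j + 1) div 2)"
  have "\<bar>tilde_cplx w n j\<bar> \<le> cmod ?q"
  proof (cases "odd j")
    case True
    then have "tilde_cplx w n j = Re ?q" using False by (simp add: tilde_cplx_def)
    then show ?thesis using abs_Re_le_cmod[of ?q] by simp
  next
    case even: False
    then have "j div 2 = (j + 1) div 2" by (auto elim: evenE)
    then have "tilde_cplx w n j = Im ?q" using False even by (simp add: tilde_cplx_def)
    then show ?thesis using abs_Im_le_cmod[of ?q] by simp
  qed
  then have "(tilde_cplx w n j)\<^sup>2 \<le> (cmod ?q)\<^sup>2"
    using abs_le_square_iff[of "tilde_cplx w n j" "cmod ?q"] by simp
  then show ?thesis by (simp add: norm_mult power_mult_distrib)
qed

lemma sum_tilde_cplx_sq_le: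
  assumes w: "w \<in> l2_cplx"
  shows "(\<Sum>j<J. (cmod (w (n + (j + 1) div 2)))\<^sup>2) \<le> 2 * norm (ip_cplx w w)"
proof -
  have "(\<Sum>j<J. (cmod (w (n + (j + 1) div 2)))\<^sup>2) \<le> 2 * (\<Sum>m<Suc J. (cmod (w (n + m)))\<^sup>2)"
    by (rule sum_half_index_le[where g="\<lambda>m. (cmod (w (n + m)))\<^sup>2"]) simp
  also have "\<dots> \<le> 2 * norm (ip_cplx w w)"
    using sum_shifted_le_suminf[where g="\<lambda>i. (cmod (w i))\<^sup>2" and J="Suc J" and n=n] w
    by (simp add: l2_cplx_def norm_ip_cplx_self)
  finally show ?thesis .
qed

lemma tilde_cplx_l2_real:
  assumes w: "w \<in> l2_cplx"
  shows "tilde_cplx w n \<in> l2_real"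
    "ip_real (tilde_cplx w n) (tilde_cplx w n) \<le> (cmod (w n))\<^sup>2 * (2 * norm (ip_cplx w w))"
proof -
  have "(\<Sum>j<J. (cmod (w n))\<^sup>2 * (cmod (w (n + (j + 1) div 2)))\<^sup>2) \<le> (cmod (w n))\<^sup>2 * (2 * norm (ip_cplx w w))"
    for J
    using sum_tilde_cplx_sq_le[OF w, where J=J and n=n] by (simp add: sum_distrib_left[symmetric] mult_left_mono)
  then show "tilde_cplx w n \<in> l2_real"
    "ip_real (tilde_cplx w n) (tilde_cplx w n) \<le> (cmod (w n))\<^sup>2 * (2 * norm (ip_cplx w w))"
    using l2_real_dominated[of "tilde_cplx w n" "\<lambda>j. (cmod (w n))\<^sup>2 * (cmod (w (n + (j + 1) div 2)))\<^sup>2"]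
      tilde_cplx_sq_le by blast+
qed

lemma tilde_cplx_in_Htilde:
  assumes w: "w \<in> l2_cplx"
  shows "tilde_cplx w \<in> Htilde"
proof (rule Htilde_memI[OF tilde_cplx_l2_real[OF w]])
  show "summable (\<lambda>n. (cmod (w n))\<^sup>2 * (2 * norm (ip_cplx w w)))"
    using w by (intro summable_mult2) (simp add: l2_cplx_def)
qed

lemma shift_left_l2_cplx: "w \<in> l2_cplx \<Longrightarrow> (\<lambda>j. w (n + j)) \<in> l2_cplx"
  unfolding l2_cplx_def using summable_ignore_initial_segment[of "\<lambda>i. (cmod (w i))\<^sup>2" n]
  by (simp add: add.commute)

lemma ip_cplx_shift_right:
  assumes "w \<in> l2_cplx" "v \<in> l2_cplx"
  shows "(\<lambda>j. w (n + j) * cnj (v j)) sums ip_cplx w (shift_right v n)"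
proof -
  have shifted: "(\<lambda>j. w (n + j) * cnj (v j)) sums ip_cplx (\<lambda>j. w (n + j)) v"
    using summable_ip_cplx[OF shift_left_l2_cplx[OF assms(1)] assms(2)]
    unfolding ip_cplx_def by (rule summable_sums)
  then have "(\<lambda>i. if n \<le> i then w i * cnj (v (i - n)) else 0) sums ip_cplx (\<lambda>j. w (n + j)) v"
    using sums_zero_padded_iff[of n "\<lambda>i. w i * cnj (v (i - n))"] by simp
  moreover have "(\<lambda>i. w i * cnj (shift_right v n i)) = (\<lambda>i. if n \<le> i then w i * cnj (v (i - n)) else 0)"
    by (auto simp: shift_right_def)
  ultimately have "ip_cplx w (shift_right v n) = ip_cplx (\<lambda>j. w (n + j)) v"
    unfolding ip_cplx_def by (simp add: sums_iff)
  with shifted show ?thesis by simp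
qed

lemma ip_real_tilde_cplx:
  assumes f: "f \<in> l2_real" and w: "w \<in> l2_cplx"
  shows "ip_real f (tilde_cplx w n) = Re (cnj (w n) * ip_cplx w (shift_right (pair_cplx f) n))"
proof -
  let ?P = "pair_cplx f" and ?S = "ip_cplx w (shift_right (pair_cplx f) n)"
  have "(\<lambda>m. Re (cnj (w n) * (w (n + m) * cnj (?P m)))) sums Re (cnj (w n) * ?S)"
    using ip_cplx_shift_right[OF w pair_cplx_l2_cplx(1)[OF f]]
    by (intro bounded_linear.sums[OF bounded_linear_Re] sums_mult)
  moreover have "(\<lambda>m. Re (cnj (w n) * (w (n + m) * cnj (?P m)))) sums ip_real f (tilde_cplx w n)"
  proof (rule sums_pairs[where F="\<lambda>j. f j * tilde_cplx w n j"])
    show "(\<lambda>j. f j * tilde_cplx w n j) sums ip_real f (tilde_cplx w n)"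
      using summable_ip_real[OF f tilde_cplx_l2_real(1)[OF w]] unfolding ip_real_def
      by (rule summable_sums)
    have "cmod (w n) * cmod (w n) = Re (w n) * Re (w n) + Im (w n) * Im (w n)"
      using cmod_power2[of "w n"] by (simp add: power2_eq_square)
    then show "Re (cnj (w n) * (w (n + 0) * cnj (?P 0))) = f 0 * tilde_cplx w n 0"
      by (simp add: pair_cplx_def tilde_cplx_def algebra_simps power2_eq_square)
    fix m
    have "2 * Suc m - 1 = 2 * m + 1" "2 * Suc m = 2 * m + 2"
      "(2 * m + 1 + 1) div 2 = Suc m" "(2 * m + 2) div 2 = Suc m" by simp_all
    then show "Re (cnj (w n) * (w (n + Suc m) * cnj (?P (Suc m)))) =
        f (2 * m + 1) * tilde_cplx w n (2 * m + 1) + f (2 * m + 2) * tilde_cplx w n (2 * m + 2)"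
      unfolding pair_cplx_def tilde_cplx_def by (simp del: mult_Suc_right add: algebra_simps)
  qed
  ultimately show ?thesis using sums_unique2 by blast
qed

lemma bessel_seq_tilde_cplx:
  assumes "bessel_seq l2_cplx ip_cplx x"
  shows "bessel_seq Htilde ip_H (\<lambda>k. tilde_cplx (x k))"
proof -
  obtain B where x: "\<And>k. x k \<in> l2_cplx"
    and sx: "\<And>v. v \<in> l2_cplx \<Longrightarrow> summable (\<lambda>k. (cmod (ip_cplx v (x k)))\<^sup>2)"
    and Bx: "\<And>v. v \<in> l2_cplx \<Longrightarrow> (\<Sum>k. (cmod (ip_cplx v (x k)))\<^sup>2) \<le> B * cmod (ip_cplx v v)"
    and xB: "\<And>k. cmod (ip_cplx (x k) (x k)) \<le> B"
    using assms by (rule bessel_seq_boundE) blast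
  show ?thesis
  proof (rule bessel_seq_HtildeI)
    show "tilde_cplx (x k) \<in> Htilde" for k using x by (rule tilde_cplx_in_Htilde)
    fix z assume z: "z \<in> Htilde"
    then have zn: "\<And>n. z n \<in> l2_real" and sz: "summable (\<lambda>n. ip_real (z n) (z n))"
      by (auto simp: Htilde_def)
    define v where "v n = shift_right (pair_cplx (z n)) n" for n
    have v: "v n \<in> l2_cplx" "cmod (ip_cplx (v n) (v n)) = ip_real (z n) (z n)" for n
      unfolding v_def using shift_right_l2_cplx pair_cplx_l2_cplx[OF zn] by auto
    have ip: "ip_H z (tilde_cplx (x k)) = (\<Sum>n. Re (cnj (x k n) * ip_cplx (x k) (v n)))" for k
      unfolding ip_H_def v_def using ip_real_tilde_cplx[OF zn x] by simp
    have "\<bar>Re (cnj (x k n) * ip_cplx (x k) (v n))\<bar> \<le> cmod (x k n) * cmod (ip_cplx (x k) (v n))" for k n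
      using abs_Re_le_cmod[of "cnj (x k n) * ip_cplx (x k) (v n)"] by (simp add: norm_mult)
    moreover have "summable (\<lambda>n. (cmod (x k n))\<^sup>2)" "(\<Sum>n. (cmod (x k n))\<^sup>2) \<le> B" for k
      using x[of k] xB[of k] norm_ip_cplx_self[OF x[of k]] by (simp_all add: l2_cplx_def)
    moreover have "cmod (ip_cplx (x k) (v n)) = cmod (ip_cplx (v n) (x k))" for k n
      using ip_cplx_commute[OF v(1) x] by simp
    then have "summable (\<lambda>k. (cmod (ip_cplx (x k) (v n)))\<^sup>2)"
      "(\<Sum>k. (cmod (ip_cplx (x k) (v n)))\<^sup>2) \<le> B * ip_real (z n) (z n)" for n
      using sx[OF v(1)] Bx[OF v(1)] v(2) by simp_all
    moreover have "summable (\<lambda>n. B * ip_real (z n) (z n))" using sz by (rule summable_mult)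
    ultimately have "summable (\<lambda>k. (\<Sum>n. Re (cnj (x k n) * ip_cplx (x k) (v n)))\<^sup>2)"
      "(\<Sum>k. (\<Sum>n. Re (cnj (x k n) * ip_cplx (x k) (v n)))\<^sup>2) \<le> B * (\<Sum>n. B * ip_real (z n) (z n))"
      using summable_squares_of_suminf[of "\<lambda>k n. Re (cnj (x k n) * ip_cplx (x k) (v n))"
          "\<lambda>k n. cmod (x k n)" "\<lambda>k n. cmod (ip_cplx (x k) (v n))" B "\<lambda>n. B * ip_real (z n) (z n)"]
      by simp_all
    moreover have "(\<Sum>n. B * ip_real (z n) (z n)) = B * ip_H z z"
      unfolding ip_H_def using sz by (rule suminf_mult)
    ultimately show "summable (\<lambda>k. (ip_H z (tilde_cplx (x k)))\<^sup>2)"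
      "(\<Sum>k. (ip_H z (tilde_cplx (x k)))\<^sup>2) \<le> (B * B) * ip_H z z"
      by (simp_all add: ip)
  qed
qed

lemma not_frame_seq_tilde_cplx:
  assumes "bessel_seq l2_cplx ip_cplx x"
  shows "\<not> frame_seq Htilde ip_H (\<lambda>k. tilde_cplx (x k))"
proof -
  obtain B where x: "\<And>k. x k \<in> l2_cplx"
    and sx: "\<And>v. v \<in> l2_cplx \<Longrightarrow> summable (\<lambda>k. (cmod (ip_cplx v (x k)))\<^sup>2)"
    and xB: "\<And>k. cmod (ip_cplx (x k) (x k)) \<le> B"
    using assms by (rule bessel_seq_boundE) blast
  show ?thesis
  proof (rule not_frame_seqI[where e=Htilde_unit and p="\<lambda>k. (cmod (x k 0))\<^sup>2"
        and h="\<lambda>k j. (cmod (x k ((j + 1) div 2)))\<^sup>2"])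
    show "(norm (ip_H (Htilde_unit j) (tilde_cplx (x k))))\<^sup>2
        \<le> (cmod (x k 0))\<^sup>2 * (cmod (x k ((j + 1) div 2)))\<^sup>2" for k j
      using tilde_cplx_sq_le[of "x k" 0 j] by (simp add: ip_H_Htilde_unit)
    show "summable (\<lambda>k. (cmod (x k 0))\<^sup>2)"
      using sx[OF unit_seq_l2_cplx] by (simp add: ip_cplx_unit_seq)
    show "(\<Sum>j<J. (cmod (x k ((j + 1) div 2)))\<^sup>2) \<le> 2 * B" for k J
    proof -
      have "(\<Sum>j<J. (cmod (x k ((j + 1) div 2)))\<^sup>2) \<le> 2 * cmod (ip_cplx (x k) (x k))"
        using sum_tilde_cplx_sq_le[OF x[of k], where J=J and n=0] by simp
      then show ?thesis using xB[of k] by linarith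
    qed
  qed (simp_all add: Htilde_unit_in_Htilde ip_H_Htilde_unit_self)
qed

theorem mainTheorem13:
  shows "(\<forall>x :: nat \<Rightarrow> nat \<Rightarrow> real. bessel_seq l2_real ip_real x \<longrightarrow>
            bessel_seq Htilde ip_H (\<lambda>k. tilde_real (x k)) \<and>
            \<not> frame_seq Htilde ip_H (\<lambda>k. tilde_real (x k))) \<and>
         (\<forall>x :: nat \<Rightarrow> nat \<Rightarrow> complex. bessel_seq l2_cplx ip_cplx x \<longrightarrow>
            bessel_seq Htilde ip_H (\<lambda>k. tilde_cplx (x k)) \<and>
            \<not> frame_seq Htilde ip_H (\<lambda>k. tilde_cplx (x k)))"
  using bessel_seq_tilde_real not_frame_seq_tilde_real bessel_seq_tilde_cplx not_frame_seq_tilde_cplx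
  by blast

end
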